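(* Let $f\colon\boldsymbol{A}\to\boldsymbol{B}$ be a homomorphism between semilattices, $F$ a filter of $\boldsymbol{B}$, and $G\in\boldsymbol{A}_\ast$. If $f^{-1}[F]\subseteq G$ and the filter of $\boldsymbol{B}$ generated by $F\cup f[G]$ is disjoint from $f[A\smallsetminus G]$, then there exists $H\in\boldsymbol{B}_\ast$ such that $F\subseteq H$ and $G=f^{-1}[H]$.
   Context: A semilattice $\langle A;\land\rangle$ is ordered by $a\le b$ iff $a\land b=a$. A filter is a nonempty upset closed under binary meets. A filter is meet irreducible if it is proper and not the intersection of two filters both different from it. For a semilattice $\boldsymbol{A}$, $\boldsymbol{A}_\ast$ denotes the set (poset under inclusion) of meet irreducible filters of $\boldsymbol{A}$. *)

theory Defs
  imports Main
begin

text \<open>Semilattices are modelled as types of class semilattice_inf (meet = inf,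
  order a \<le> b iff inf a b = a). The carrier of the semilattice is UNIV.\<close>

definition sl_filter :: "'a::semilattice_inf set \<Rightarrow> bool" where
  "sl_filter F \<longleftrightarrow> F \<noteq> {} \<and> (\<forall>a b. a \<in> F \<and> a \<le> b \<longrightarrow> b \<in> F)
                    \<and> (\<forall>a b. a \<in> F \<and> b \<in> F \<longrightarrow> inf a b \<in> F)"

definition meet_irreducible_filter :: "'a::semilattice_inf set \<Rightarrow> bool" where
  "meet_irreducible_filter F \<longleftrightarrow> sl_filter F \<and> F \<noteq> UNIV \<and>
     (\<forall>G1 G2. sl_filter G1 \<and> sl_filter G2 \<and> F = G1 \<inter> G2 \<longrightarrow> G1 = F \<or> G2 = F)"

definition gen_filter :: "'a::semilattice_inf set \<Rightarrow> 'a set" where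
  "gen_filter S = \<Inter> {F. sl_filter F \<and> S \<subseteq> F}"

definition sl_hom :: "('a::semilattice_inf \<Rightarrow> 'b::semilattice_inf) \<Rightarrow> bool" where
  "sl_hom f \<longleftrightarrow> (\<forall>a b. f (inf a b) = inf (f a) (f b))"

end

theory Submission
  imports Defs
begin

text \<open>By Zorn's lemma, extend the filter generated by \<open>F \<union> f ` G\<close> to a filter \<open>H\<close> maximal among
  the filters disjoint from \<open>f ` (UNIV - G)\<close>. Then \<open>f -` H = G\<close>, and \<open>H\<close> is meet irreducible:
  if \<open>H = H\<^sub>1 \<inter> H\<^sub>2\<close> with both \<open>H\<^sub>i\<close> strictly larger, maximality makes each \<open>H\<^sub>i\<close> meet
  \<open>f ` (UNIV - G)\<close>, so \<open>G = f -` H\<^sub>1 \<inter> f -` H\<^sub>2\<close> splits \<open>G\<close> into two filters different from \<open>G\<close>.\<close>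

lemma sl_filterI:
  assumes "F \<noteq> {}"
    and "\<And>a b. a \<in> F \<Longrightarrow> a \<le> b \<Longrightarrow> b \<in> F"
    and "\<And>a b. a \<in> F \<Longrightarrow> b \<in> F \<Longrightarrow> inf a b \<in> F"
  shows "sl_filter F"
  using assms unfolding sl_filter_def by blast

lemma sl_filter_nonempty: "sl_filter F \<Longrightarrow> F \<noteq> {}"
  unfolding sl_filter_def by blast

lemma sl_filter_upward: "sl_filter F \<Longrightarrow> a \<in> F \<Longrightarrow> a \<le> b \<Longrightarrow> b \<in> F"
  unfolding sl_filter_def by blast

lemma sl_filter_inf: "sl_filter F \<Longrightarrow> a \<in> F \<Longrightarrow> b \<in> F \<Longrightarrow> inf a b \<in> F"
  unfolding sl_filter_def by blast

lemma subset_gen_filter: "S \<subseteq> gen_filter S"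
  unfolding gen_filter_def by blast

lemma sl_filter_gen_filter:
  assumes "S \<noteq> {}"
  shows "sl_filter (gen_filter S)"
proof (rule sl_filterI)
  show "gen_filter S \<noteq> {}"
    using assms subset_gen_filter by blast
qed (auto simp: gen_filter_def intro: sl_filter_upward sl_filter_inf)

lemma sl_hom_mono:
  assumes "sl_hom f" and "a \<le> b"
  shows "f a \<le> f b"
proof -
  have "f a = inf (f a) (f b)"
    using assms by (metis sl_hom_def inf.absorb1)
  then show ?thesis
    by (metis inf.cobounded2)
qed

lemma sl_filter_vimage:
  assumes "sl_hom f" and "sl_filter H" and "f -` H \<noteq> {}"
  shows "sl_filter (f -` H)"
proof (rule sl_filterI)
  fix a b
  assume "a \<in> f -` H" and "a \<le> b"
  then show "b \<in> f -` H"
    using sl_hom_mono[OF assms(1)] sl_filter_upward[OF assms(2)] by blast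
next
  fix a b
  assume "a \<in> f -` H" and "b \<in> f -` H"
  then show "inf a b \<in> f -` H"
    using assms(1) sl_filter_inf[OF assms(2)] unfolding sl_hom_def by auto
qed (fact assms(3))

lemma sl_filter_Union_chain:
  assumes "C \<noteq> {}" and "\<And>F. F \<in> C \<Longrightarrow> sl_filter F"
    and "\<And>F F'. F \<in> C \<Longrightarrow> F' \<in> C \<Longrightarrow> F \<subseteq> F' \<or> F' \<subseteq> F"
  shows "sl_filter (\<Union>C)"
proof (rule sl_filterI)
  show "\<Union>C \<noteq> {}"
    using assms(1,2) sl_filter_nonempty by blast
next
  fix a b
  assume "a \<in> \<Union>C" and "a \<le> b"
  then show "b \<in> \<Union>C"
    using assms(2) sl_filter_upward by blast
next
  fix a b
  assume "a \<in> \<Union>C" and "b \<in> \<Union>C"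
  then obtain F F' where "F \<in> C" "a \<in> F" "F' \<in> C" "b \<in> F'"
    by blast
  then show "inf a b \<in> \<Union>C"
    using assms(2,3) sl_filter_inf by (metis UnionI subsetD)
qed

lemma exists_maximal_filter_disjoint:
  assumes "sl_filter K" and "K \<inter> X = {}"
  obtains H where "sl_filter H" and "K \<subseteq> H" and "H \<inter> X = {}"
    and "\<And>H'. sl_filter H' \<Longrightarrow> H \<subseteq> H' \<Longrightarrow> H' \<inter> X = {} \<Longrightarrow> H' = H"
proof -
  define \<F> where "\<F> = {H. sl_filter H \<and> K \<subseteq> H \<and> H \<inter> X = {}}"
  have "\<exists>H\<in>\<F>. \<forall>H'\<in>\<F>. H \<subseteq> H' \<longrightarrow> H' = H"
  proof (rule subset_Zorn_nonempty)
    show "\<F> \<noteq> {}"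
      using assms unfolding \<F>_def by blast
  next
    fix C
    assume "C \<noteq> {}" and "subset.chain \<F> C"
    then have "C \<subseteq> \<F>" and total: "\<And>F F'. F \<in> C \<Longrightarrow> F' \<in> C \<Longrightarrow> F \<subseteq> F' \<or> F' \<subseteq> F"
      unfolding subset.chain_def by blast+
    have "\<And>F. F \<in> C \<Longrightarrow> sl_filter F"
      using \<open>C \<subseteq> \<F>\<close> unfolding \<F>_def by blast
    from \<open>C \<noteq> {}\<close> this total have "sl_filter (\<Union>C)"
      by (rule sl_filter_Union_chain)
    with \<open>C \<noteq> {}\<close> \<open>C \<subseteq> \<F>\<close> show "\<Union>C \<in> \<F>"
      unfolding \<F>_def by blast
  qed
  then obtain H where "H \<in> \<F>" and "\<And>H'. H' \<in> \<F> \<Longrightarrow> H \<subseteq> H' \<Longrightarrow> H' = H"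
    by blast
  then show thesis
    by (intro that) (auto simp: \<F>_def)
qed

lemma meet_irreducible_filter_if_maximal_disjoint:
  assumes "sl_hom f" and "meet_irreducible_filter G"
    and "sl_filter H" and "G = f -` H"
    and maximal: "\<And>H'. sl_filter H' \<Longrightarrow> H \<subseteq> H' \<Longrightarrow> H' \<inter> f ` (UNIV - G) = {} \<Longrightarrow> H' = H"
  shows "meet_irreducible_filter H"
  unfolding meet_irreducible_filter_def
proof (intro conjI allI impI)
  show "sl_filter H" by fact
  show "H \<noteq> UNIV"
    using assms(2,4) unfolding meet_irreducible_filter_def by blast
next
  fix H\<^sub>1 H\<^sub>2
  assume split: "sl_filter H\<^sub>1 \<and> sl_filter H\<^sub>2 \<and> H = H\<^sub>1 \<inter> H\<^sub>2"
  then have filters: "sl_filter H\<^sub>1" "sl_filter H\<^sub>2" and "H \<subseteq> H\<^sub>1" "H \<subseteq> H\<^sub>2"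
    by auto
  show "H\<^sub>1 = H \<or> H\<^sub>2 = H"
  proof (rule ccontr)
    assume "\<not> (H\<^sub>1 = H \<or> H\<^sub>2 = H)"
    then have "H\<^sub>1 \<inter> f ` (UNIV - G) \<noteq> {}" and "H\<^sub>2 \<inter> f ` (UNIV - G) \<noteq> {}"
      using maximal filters \<open>H \<subseteq> H\<^sub>1\<close> \<open>H \<subseteq> H\<^sub>2\<close> by metis+
    then obtain a\<^sub>1 a\<^sub>2 where "a\<^sub>1 \<notin> G" "f a\<^sub>1 \<in> H\<^sub>1" "a\<^sub>2 \<notin> G" "f a\<^sub>2 \<in> H\<^sub>2"
      by blast
    then have "f -` H\<^sub>1 \<noteq> G" "f -` H\<^sub>2 \<noteq> G"
      and "sl_filter (f -` H\<^sub>1)" "sl_filter (f -` H\<^sub>2)"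
      using filters sl_filter_vimage[OF assms(1)] by blast+
    moreover have "G = f -` H\<^sub>1 \<inter> f -` H\<^sub>2"
      using assms(4) split by auto
    moreover have "\<And>G\<^sub>1 G\<^sub>2. sl_filter G\<^sub>1 \<Longrightarrow> sl_filter G\<^sub>2 \<Longrightarrow> G = G\<^sub>1 \<inter> G\<^sub>2 \<Longrightarrow> G\<^sub>1 = G \<or> G\<^sub>2 = G"
      using assms(2) unfolding meet_irreducible_filter_def by blast
    ultimately show False
      by blast
  qed
qed

theorem lemma3p6:
  fixes f :: "'a::semilattice_inf \<Rightarrow> 'b::semilattice_inf"
    and F :: "'b set" and G :: "'a set"
  assumes "sl_hom f"
    and "sl_filter F"
    and "meet_irreducible_filter G"
    and "f -` F \<subseteq> G"
    and "gen_filter (F \<union> f ` G) \<inter> f ` (UNIV - G) = {}"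
  shows "\<exists>H. meet_irreducible_filter H \<and> F \<subseteq> H \<and> G = f -` H"
proof -
  have "F \<union> f ` G \<noteq> {}"
    using sl_filter_nonempty[OF assms(2)] by blast
  then have "sl_filter (gen_filter (F \<union> f ` G))"
    by (rule sl_filter_gen_filter)
  from exists_maximal_filter_disjoint[OF this assms(5)]
  obtain H where H: "sl_filter H" "gen_filter (F \<union> f ` G) \<subseteq> H" "H \<inter> f ` (UNIV - G) = {}"
    and maximal: "\<And>H'. sl_filter H' \<Longrightarrow> H \<subseteq> H' \<Longrightarrow> H' \<inter> f ` (UNIV - G) = {} \<Longrightarrow> H' = H"
    by blast
  have "F \<union> f ` G \<subseteq> H"
    using subset_gen_filter H(2) by (rule subset_trans)
  then have "F \<subseteq> H" and "f ` G \<subseteq> H"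
    by simp_all
  moreover have "f -` H \<subseteq> G"
    using H(3) by blast
  ultimately have "G = f -` H"
    by blast
  moreover have "meet_irreducible_filter H"
    using assms(1,3) H(1) \<open>G = f -` H\<close> maximal
    by (rule meet_irreducible_filter_if_maximal_disjoint)
  ultimately show ?thesis
    using \<open>F \<subseteq> H\<close> by blast
qed

end
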